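(* If $P$ is a finite poset, then the interval monoid $\mathcal{M}(P)$ embeds into a finitely generated free monoid.
   Context: For a poset $P$, the interval monoid $\mathcal{M}(P)$ is the monoid presented by generators $[x,y]$ for $x\le y$ in $P$ and relations $[x,x]=1$ ($x\in P$) and $[x,z]=[x,y][y,z]$ whenever $x\le y\le z$. *)

theory Defs
  imports Main
begin

text \<open>Words in the generators [x,y] (x \<le> y) of the interval monoid, represented as
  lists of pairs (x,y).\<close>
definition interval_words :: "('a::order \<times> 'a) list set" where
  "interval_words = {w. \<forall>(x,y)\<in>set w. x \<le> y}"

text \<open>The interval monoid M(P)
  is the quotient of interval_words by this congruence.\<close>
inductive interval_cong :: "('a::order \<times> 'a) list \<Rightarrow> ('a \<times> 'a) list \<Rightarrow> bool" where
  unit_rel: "interval_cong [(x,x)] []"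
| comp_rel: "x \<le> y \<Longrightarrow> y \<le> z \<Longrightarrow> interval_cong [(x,z)] [(x,y),(y,z)]"
| refl: "interval_cong w w"
| sym: "interval_cong u v \<Longrightarrow> interval_cong v u"
| trans: "interval_cong u v \<Longrightarrow> interval_cong v w \<Longrightarrow> interval_cong u w"
| ctxt: "interval_cong u v \<Longrightarrow> interval_cong (a @ u @ b) (a @ v @ b)"

text \<open>M(P) embeds into the free monoid A* on a finite alphabet A (here A \<subseteq> nat):
  there is an assignment f of words over A to the generators such that the induced
  monoid homomorphism identifies two words exactly when they are congruent.\<close>
definition embeds_in_fg_free_monoid :: "('a::order) itself \<Rightarrow> bool" where
  "embeds_in_fg_free_monoid _ \<longleftrightarrow>
     (\<exists>(A::nat set) (f :: 'a \<times> 'a \<Rightarrow> nat list).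
        finite A \<and>
        (\<forall>x y. x \<le> y \<longrightarrow> set (f (x,y)) \<subseteq> A) \<and>
        (\<forall>u\<in>interval_words. \<forall>v\<in>interval_words.
            concat (map f u) = concat (map f v) \<longleftrightarrow> interval_cong u v))"

end

theory Submission
  imports Defs
begin

text \<open>Number the elements of \<open>P\<close> by an injective strictly monotone map \<open>num\<close> into \<open>\<nat>\<close> and
  send the generator \<open>[x,y]\<close> to the word \<open>num x, num x + 1, \<dots>, num y - 1\<close>; the defining
  relations then hold in the free monoid. Conversely, cutting a word over \<open>\<nat>\<close> into its
  maximal runs of consecutive letters is canonical. Using \<open>[x,x] = 1\<close> and
  \<open>[x,y][y,z] = [x,z]\<close>, every interval word is congruent to a product of proper intervals
  \<open>[x\<^sub>1,y\<^sub>1]\<cdots>[x\<^sub>k,y\<^sub>k]\<close> with \<open>y\<^sub>i \<noteq> x\<^sub>i\<^sub>+\<^sub>1\<close>; since \<open>num\<close> is injective, the maximal runs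
  of its image are exactly the intervals \<open>[num x\<^sub>i, num y\<^sub>i)\<close>, so the image of a word determines
  this product and hence the congruence class.\<close>

text \<open>A pair \<open>(a, b)\<close> in \<open>runs w\<close> stands for the maximal run \<open>[a..<b]\<close> of \<open>w\<close>.\<close>

fun runs :: "nat list \<Rightarrow> (nat \<times> nat) list" where
  "runs [] = []"
| "runs (a # w) = (case runs w of [] \<Rightarrow> [(a, Suc a)]
     | (c, d) # r \<Rightarrow> (if c = Suc a then (a, d) # r else (a, Suc a) # (c, d) # r))"

lemma runs_upt_append:
  assumes "a < b"
  shows "runs ([a..<b] @ w) = (case runs w of [] \<Rightarrow> [(a, b)]
     | (c, d) # r \<Rightarrow> (if c = b then (a, d) # r else (a, b) # (c, d) # r))"
  using assms
proof (induction b arbitrary: w)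
  case 0
  then show ?case by simp
next
  case (Suc b)
  show ?case
  proof (cases "a = b")
    case True
    then show ?thesis by (simp split: list.splits prod.splits)
  next
    case False
    then have "a < b" using Suc.prems by simp
    moreover have "[a..<Suc b] @ w = [a..<b] @ (b # w)" using \<open>a < b\<close> by simp
    ultimately show ?thesis
      using Suc.IH[of "b # w"] by (auto split: list.splits prod.splits)
  qed
qed

lemma finite_order_inj_strict_mono_nat:
  "\<exists>num :: 'a::{order,finite} \<Rightarrow> nat. inj num \<and> strict_mono num"
proof -
  define K where "K = card (UNIV :: 'a set)"
  obtain h :: "'a \<Rightarrow> nat" where h: "bij_betw h UNIV {0..<K}"
    using ex_bij_betw_finite_nat[of "UNIV :: 'a set"] unfolding K_def by auto
  then have h_less: "h x < K" and "inj h" for x by (auto simp: bij_betw_def)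
  define height :: "'a \<Rightarrow> nat" where "height x = card {z. z < x}" for x
  define num where "num x = height x * K + h x" for x
  have "strict_mono num"
  proof (rule strict_monoI)
    fix x y :: 'a
    assume "x < y"
    then have "height x < height y"
      unfolding height_def by (intro psubset_card_mono) (auto dest: less_trans)
    then have "(height x + 1) * K \<le> height y * K" by (intro mult_right_mono) simp_all
    then show "num x < num y" unfolding num_def using h_less[of x] by simp
  qed
  moreover have "inj num"
  proof (rule injI)
    fix x y
    assume "num x = num y"
    then have "num x mod K = num y mod K" by simp
    then have "h x = h y" unfolding num_def using h_less by simp
    then show "x = y" using \<open>inj h\<close> by (auto dest: injD)
  qed
  ultimately show ?thesis by blast
qed

definition interval_code :: "('a \<Rightarrow> nat) \<Rightarrow> 'a \<times> 'a \<Rightarrow> nat list" where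
  "interval_code num p = [num (fst p)..<num (snd p)]"

lemma interval_cong_Cons: "interval_cong u v \<Longrightarrow> interval_cong (p # u) (p # v)"
  using interval_cong.ctxt[of u v "[p]" "[]"] by simp

lemma interval_cong_unit_Cons: "interval_cong ((x, x) # u) u"
  using interval_cong.ctxt[OF interval_cong.unit_rel[of x], of "[]" u] by simp

lemma interval_cong_comp_Cons:
  "x \<le> y \<Longrightarrow> y \<le> z \<Longrightarrow> interval_cong ((x, y) # (y, z) # u) ((x, z) # u)"
  using interval_cong.sym[OF interval_cong.ctxt[OF interval_cong.comp_rel, of x y z "[]" u]]
  by simp

lemma interval_cong_imp_code_eq:
  assumes "mono num" and "interval_cong u v"
  shows "concat (map (interval_code num) u) = concat (map (interval_code num) v)"
  using assms(2)
proof (induction rule: interval_cong.induct)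
  case (comp_rel x y z)
  then have "num x \<le> num y" "num y \<le> num z" using assms(1) by (auto dest: monoD)
  then show ?case
    using upt_add_eq_append[of "num x" "num y" "num z - num y"] by (simp add: interval_code_def)
qed (auto simp: interval_code_def)

lemma runs_upt_Cons_normal_form:
  assumes "inj num" and "strict_mono num" and "x < y"
    and R_proper: "\<forall>(x, y)\<in>set R. x < y" and runs_w: "runs w = map (map_prod num num) R"
  shows "\<exists>S. (\<forall>(x, y)\<in>set S. x < y) \<and> interval_cong ((x, y) # R) S \<and>
    runs ([num x..<num y] @ w) = map (map_prod num num) S"
proof -
  have "num x < num y" using assms(2,3) by (simp add: strict_mono_def)
  from runs_upt_append[OF this] runs_w have runs_xy:
    "runs ([num x..<num y] @ w) = (case map (map_prod num num) R of
       [] \<Rightarrow> [(num x, num y)]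
     | (c, d) # r \<Rightarrow> (if c = num y then (num x, d) # r else (num x, num y) # (c, d) # r))"
    by simp
  show ?thesis
  proof (cases R)
    case Nil
    then show ?thesis using runs_xy \<open>x < y\<close>
      by (intro exI[of _ "[(x, y)]"]) (auto intro: interval_cong.refl)
  next
    case (Cons q R')
    obtain a b where R: "R = (a, b) # R'" using Cons by (cases q) simp
    show ?thesis
    proof (cases "a = y")
      case True
      from R_proper R have "y < b" by (simp add: True)
      with \<open>x < y\<close> have "interval_cong ((x, y) # R) ((x, b) # R')"
        unfolding R True by (intro interval_cong_comp_Cons) simp_all
      moreover have "x < b" using \<open>x < y\<close> \<open>y < b\<close> by (rule less_trans)
      ultimately show ?thesis using runs_xy R_proper R True
        by (intro exI[of _ "(x, b) # R'"]) auto
    next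
      case False
      then have "num a \<noteq> num y" using assms(1) by (auto dest: injD)
      then show ?thesis using runs_xy R_proper R \<open>x < y\<close>
        by (intro exI[of _ "(x, y) # R"]) (auto intro: interval_cong.refl)
    qed
  qed
qed

lemma runs_interval_code_normal_form:
  assumes "inj num" and "strict_mono num" and "u \<in> interval_words"
  shows "\<exists>R. (\<forall>(x, y)\<in>set R. x < y) \<and> interval_cong u R \<and>
    runs (concat (map (interval_code num) u)) = map (map_prod num num) R"
  using assms(3)
proof (induction u)
  case Nil
  then show ?case by (auto intro: interval_cong.refl)
next
  case (Cons p u)
  obtain x y where p: "p = (x, y)" by fastforce
  from Cons.prems p have "x \<le> y" "u \<in> interval_words" by (auto simp: interval_words_def)
  then obtain R where R_proper: "\<forall>(x, y)\<in>set R. x < y" and "interval_cong u R"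
    and runs_u: "runs (concat (map (interval_code num) u)) = map (map_prod num num) R"
    using Cons.IH by blast
  consider "x = y" | "x < y" using \<open>x \<le> y\<close> by fastforce
  then show ?case
  proof cases
    case 1
    then have "interval_cong (p # u) R"
      using interval_cong_unit_Cons \<open>interval_cong u R\<close> p by (blast intro: interval_cong.trans)
    moreover have "interval_code num p = []" using 1 p by (simp add: interval_code_def)
    ultimately show ?thesis using R_proper runs_u by auto
  next
    case 2
    from runs_upt_Cons_normal_form[OF assms(1,2) this R_proper runs_u] obtain S
      where "\<forall>(x, y)\<in>set S. x < y" and "interval_cong ((x, y) # R) S"
        and "runs ([num x..<num y] @ concat (map (interval_code num) u)) = map (map_prod num num) S"
      by blast
    moreover have "interval_cong (p # u) ((x, y) # R)"
      using \<open>interval_cong u R\<close> unfolding p by (rule interval_cong_Cons)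
    moreover have "interval_code num p = [num x..<num y]" by (simp add: p interval_code_def)
    ultimately show ?thesis by (intro exI[of _ S]) (auto intro: interval_cong.trans)
  qed
qed

lemma interval_code_eq_imp_cong:
  assumes "inj num" and "strict_mono num" and "u \<in> interval_words" and "v \<in> interval_words"
    and "concat (map (interval_code num) u) = concat (map (interval_code num) v)"
  shows "interval_cong u v"
proof -
  obtain R where "interval_cong u R"
    and R: "runs (concat (map (interval_code num) u)) = map (map_prod num num) R"
    using runs_interval_code_normal_form[OF assms(1-3)] by blast
  obtain S where "interval_cong v S"
    and S: "runs (concat (map (interval_code num) v)) = map (map_prod num num) S"
    using runs_interval_code_normal_form[OF assms(1,2,4)] by blast
  have "inj (map_prod num num)"
    using map_prod_inj_on[OF assms(1) assms(1)] by simp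
  with R S assms(5) have "R = S" by simp
  with \<open>interval_cong u R\<close> \<open>interval_cong v S\<close> show ?thesis
    by (blast intro: interval_cong.sym interval_cong.trans)
qed

theorem proposition8p2:
  shows "embeds_in_fg_free_monoid TYPE('a::{order,finite})"
proof -
  obtain num :: "'a \<Rightarrow> nat" where "inj num" and "strict_mono num"
    using finite_order_inj_strict_mono_nat by blast
  then have "mono num"
    by (intro monoI) (auto simp: order.order_iff_strict dest: strict_monoD)
  show ?thesis
    unfolding embeds_in_fg_free_monoid_def
  proof (intro exI conjI allI impI ballI)
    show "finite (\<Union>p. set (interval_code num p))" by simp
    show "set (interval_code num (x, y)) \<subseteq> (\<Union>p. set (interval_code num p))" for x y :: 'a
      by blast
    show "concat (map (interval_code num) u) = concat (map (interval_code num) v)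
        \<longleftrightarrow> interval_cong u v" if "u \<in> interval_words" "v \<in> interval_words" for u v
      using interval_code_eq_imp_cong[OF \<open>inj num\<close> \<open>strict_mono num\<close> that]
        interval_cong_imp_code_eq[OF \<open>mono num\<close>] by blast
  qed
qed

end
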